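(* (i) Let $Q$ be a QNP and $\pi$ a policy for $Q$. If $\tau=s_0,s_1,\dots$ is an infinite $\pi$-trajectory of $Q$, then the sequence of boolean states $\bar\tau=\bar s_0,\bar s_1,\dots$ is an infinite $\pi$-trajectory of the FOND problem $P=T_D(Q)$. (ii) The converse fails: there exist a QNP $Q$, a policy $\pi$ for $Q$ and an infinite $\pi$-trajectory $\bar s_0,\bar s_1,\dots$ of $T_D(Q)$ (from its initial state) such that there is no infinite $\pi$-trajectory $s_0,s_1,\dots$ of $Q$ whose boolean states are $\bar s_0,\bar s_1,\dots$.
   Context: A qualitative numerical problem (QNP) is a tuple $Q=\langle F,V,I,O,G\rangle$ where $F$ is a finite set of propositional variables and $V$ a finite set of numerical variables taking non-negative real values. $F$-literals are $p,\neg p$; $V$-literals are $X=0$ and $X>0$. $I$ and $G$ are consistent sets of $F$- and $V$-literals. Each action $a\in O$ has a precondition $Pre(a)$ (set of $F$- and $V$-literals), propositional effects $\mathit{Eff}(a)$ (set of $F$-literals) and numerical effects $N(a)$ (atoms $Inc(X)$, $Dec(X)$, at most one per variable); if $Dec(X)\in N(a)$ then $X>0\in Pre(a)$. A state $s$ assigns a truth value to each $p\in F$ and a real $s[X]\ge0$ to each $X\in V$. Initial states satisfy $I$ under a closed-world assumption. $a$ is applicable in $s$ if $s$ satisfies $Pre(a)$; goal states satisfy $G$. For applicable $a$, $s'\in F(a,s)$ iff propositional effects are applied (other atoms unchanged), $s'[X]>s[X]$ if $Inc(X)\in N(a)$, $s'[X]<s[X]$ if $Dec(X)\in N(a)$,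 and $s'[X]=s[X]$ otherwise. A trajectory is a sequence $s_0,a_0,s_1,\dots$ with $s_0$ initial, $a_i$ applicable in $s_i$, $s_{i+1}\in F(a_i,s_i)$, which for some $\epsilon>0$ is an $\epsilon$-trajectory: for all $X,i$, $s_{i+1}[X]\ne s_i[X]$ implies $|s_{i+1}[X]-s_i[X]|\ge\epsilon$ or $0=s_{i+1}[X]<s_i[X]<\epsilon$. The boolean state $\bar s$ of $s$ is the truth valuation on the atoms $p\in F$ and $X=0$. A policy is a partial map $\pi$ from states to actions with $\pi(s)=\pi(s')$ whenever $\bar s=\bar s'$; a $\pi$-trajectory has $a_i=\pi(s_i)$. A FOND problem has propositional states, a unique initial state, and actions with possibly nondeterministic effects $E_1\mid\cdots\mid E_k$; a $\pi$-trajectory is a sequence $t_0,t_1,\dots$ from the initial state with $\pi(t_i)$ applicable and $t_{i+1}$ a possible successor. The direct translation $T_D(Q)$ is the FOND problem over $F\cup\{p_{X=0}:X\in V\}$ obtained by reading $X=0$ as $p_{X=0}$ and $X>0$ as $\neg p_{X=0}$ in $I$, $G$, preconditions, keeping propositional effects, replacing $Inc(X)$ by the deterministic effect $\neg p_{X=0}$ and $Dec(X)$ by the nondeterministic effect $\neg p_{X=0}\mid p_{X=0}$. Its states are the boolean states of $Q$ and $\pi$ is used on it via $\bar s\mapsto\pi(s)$. *)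

theory Defs
  imports Main "HOL.Real"
begin

datatype 'p flit = FPos 'p | FNeg 'p
datatype ('p, 'v) lit = FLit "'p flit" | VZero 'v | VPos 'v
datatype 'v natom = Inc 'v | Dec 'v

record ('p, 'v, 'a) qnp =
  qF   :: "'p set"
  qV   :: "'v set"
  qI   :: "('p, 'v) lit set"
  qO   :: "'a set"
  qG   :: "('p, 'v) lit set"
  qPre :: "'a \<Rightarrow> ('p, 'v) lit set"
  qEff :: "'a \<Rightarrow> 'p flit set"
  qN   :: "'a \<Rightarrow> 'v natom set"

fun lit_in :: "'p set \<Rightarrow> 'v set \<Rightarrow> ('p, 'v) lit \<Rightarrow> bool" where
  "lit_in F V (FLit (FPos p)) = (p \<in> F)"
| "lit_in F V (FLit (FNeg p)) = (p \<in> F)"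
| "lit_in F V (VZero X) = (X \<in> V)"
| "lit_in F V (VPos X) = (X \<in> V)"

fun natom_var :: "'v natom \<Rightarrow> 'v" where
  "natom_var (Inc X) = X" | "natom_var (Dec X) = X"

definition lits_consistent :: "('p, 'v) lit set \<Rightarrow> bool" where
  "lits_consistent L \<longleftrightarrow>
     (\<forall>p. \<not> (FLit (FPos p) \<in> L \<and> FLit (FNeg p) \<in> L)) \<and>
     (\<forall>X. \<not> (VZero X \<in> L \<and> VPos X \<in> L))"

definition qnp_wf :: "('p, 'v, 'a) qnp \<Rightarrow> bool" where
  "qnp_wf Q \<longleftrightarrow>
     finite (qF Q) \<and> finite (qV Q) \<and>
     (\<forall>l \<in> qI Q. lit_in (qF Q) (qV Q) l) \<and> lits_consistent (qI Q) \<and>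
     (\<forall>l \<in> qG Q. lit_in (qF Q) (qV Q) l) \<and> lits_consistent (qG Q) \<and>
     (\<forall>a \<in> qO Q.
        (\<forall>l \<in> qPre Q a. lit_in (qF Q) (qV Q) l) \<and>
        (\<forall>l \<in> qEff Q a. lit_in (qF Q) (qV Q) (FLit l)) \<and>
        (\<forall>n \<in> qN Q a. natom_var n \<in> qV Q) \<and>
        (\<forall>X. \<not> (Inc X \<in> qN Q a \<and> Dec X \<in> qN Q a)) \<and>
        (\<forall>X. Dec X \<in> qN Q a \<longrightarrow> VPos X \<in> qPre Q a))"

type_synonym ('p, 'v) qstate = "('p \<Rightarrow> bool) \<times> ('v \<Rightarrow> real)"

definition is_qstate :: "('p, 'v) qstate \<Rightarrow> bool" where
  "is_qstate s \<longleftrightarrow> (\<forall>X. snd s X \<ge> 0)"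

fun sat_lit :: "('p, 'v) qstate \<Rightarrow> ('p, 'v) lit \<Rightarrow> bool" where
  "sat_lit s (FLit (FPos p)) = fst s p"
| "sat_lit s (FLit (FNeg p)) = (\<not> fst s p)"
| "sat_lit s (VZero X) = (snd s X = 0)"
| "sat_lit s (VPos X) = (snd s X > 0)"

text \<open>Initial states: satisfy I under the closed-world assumption (atoms p and X=0 not in I are false).\<close>
definition qnp_initial :: "('p, 'v, 'a) qnp \<Rightarrow> ('p, 'v) qstate \<Rightarrow> bool" where
  "qnp_initial Q s \<longleftrightarrow> is_qstate s \<and>
     (\<forall>p \<in> qF Q. fst s p \<longleftrightarrow> FLit (FPos p) \<in> qI Q) \<and>
     (\<forall>X \<in> qV Q. snd s X = 0 \<longleftrightarrow> VZero X \<in> qI Q)"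

definition qnp_applicable :: "('p, 'v, 'a) qnp \<Rightarrow> 'a \<Rightarrow> ('p, 'v) qstate \<Rightarrow> bool" where
  "qnp_applicable Q a s \<longleftrightarrow> a \<in> qO Q \<and> (\<forall>l \<in> qPre Q a. sat_lit s l)"

definition apply_flits :: "'p flit set \<Rightarrow> ('p \<Rightarrow> bool) \<Rightarrow> ('p \<Rightarrow> bool)" where
  "apply_flits E v = (\<lambda>p. if FPos p \<in> E then True else if FNeg p \<in> E then False else v p)"

definition qnp_succ :: "('p, 'v, 'a) qnp \<Rightarrow> 'a \<Rightarrow> ('p, 'v) qstate \<Rightarrow> ('p, 'v) qstate \<Rightarrow> bool" where
  "qnp_succ Q a s s' \<longleftrightarrow> is_qstate s' \<and>
     fst s' = apply_flits (qEff Q a) (fst s) \<and>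
     (\<forall>X. (Inc X \<in> qN Q a \<longrightarrow> snd s' X > snd s X) \<and>
          (Dec X \<in> qN Q a \<longrightarrow> snd s' X < snd s X) \<and>
          (Inc X \<notin> qN Q a \<and> Dec X \<notin> qN Q a \<longrightarrow> snd s' X = snd s X))"

definition eps_step :: "real \<Rightarrow> ('p, 'v) qstate \<Rightarrow> ('p, 'v) qstate \<Rightarrow> bool" where
  "eps_step \<epsilon> s s' \<longleftrightarrow> (\<forall>X. snd s' X \<noteq> snd s X \<longrightarrow>
      \<bar>snd s' X - snd s X\<bar> \<ge> \<epsilon> \<or> (0 = snd s' X \<and> snd s' X < snd s X \<and> snd s X < \<epsilon>))"

text \<open>Atoms of the direct translation: p \<in> F and p_{X=0} for X \<in> V.\<close>
datatype ('p, 'v) atom = PA 'p | ZA 'v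

definition bstate :: "('p, 'v, 'a) qnp \<Rightarrow> ('p, 'v) qstate \<Rightarrow> ('p, 'v) atom \<Rightarrow> bool" where
  "bstate Q s = (\<lambda>q. case q of PA p \<Rightarrow> p \<in> qF Q \<and> fst s p | ZA X \<Rightarrow> X \<in> qV Q \<and> snd s X = 0)"

definition qnp_policy :: "('p, 'v, 'a) qnp \<Rightarrow> (('p, 'v) qstate \<Rightarrow> 'a option) \<Rightarrow> bool" where
  "qnp_policy Q \<pi> \<longleftrightarrow> (\<forall>s s'. bstate Q s = bstate Q s' \<longrightarrow> \<pi> s = \<pi> s')"

definition qnp_inf_traj :: "('p, 'v, 'a) qnp \<Rightarrow> (('p, 'v) qstate \<Rightarrow> 'a option)
    \<Rightarrow> (nat \<Rightarrow> ('p, 'v) qstate) \<Rightarrow> bool" where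
  "qnp_inf_traj Q \<pi> s \<longleftrightarrow> qnp_initial Q (s 0) \<and>
     (\<forall>i. \<exists>a. \<pi> (s i) = Some a \<and> qnp_applicable Q a (s i) \<and> qnp_succ Q a (s i) (s (Suc i))) \<and>
     (\<exists>\<epsilon>>0. \<forall>i. eps_step \<epsilon> (s i) (s (Suc i)))"

text \<open>Each action has a set of nondeterministic
  effects, each given as a list of alternatives E_1 | ... | E_k (a deterministic effect is a
  singleton list); a successor chooses one alternative of each.\<close>
record ('q, 'a) fond =
  fAtoms :: "'q set"
  fInit  :: "'q \<Rightarrow> bool"
  fGoal  :: "('q \<times> bool) set"
  fActs  :: "'a set"
  fPre   :: "'a \<Rightarrow> ('q \<times> bool) set"
  fEff   :: "'a \<Rightarrow> ('q \<times> bool) set list set"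

definition fond_applicable :: "('q, 'a) fond \<Rightarrow> 'a \<Rightarrow> ('q \<Rightarrow> bool) \<Rightarrow> bool" where
  "fond_applicable P a t \<longleftrightarrow> a \<in> fActs P \<and> (\<forall>(q, b) \<in> fPre P a. t q = b)"

definition apply_eff :: "('q \<times> bool) set \<Rightarrow> ('q \<Rightarrow> bool) \<Rightarrow> ('q \<Rightarrow> bool)" where
  "apply_eff E t = (\<lambda>q. if (q, True) \<in> E then True else if (q, False) \<in> E then False else t q)"

definition fond_succ :: "('q, 'a) fond \<Rightarrow> 'a \<Rightarrow> ('q \<Rightarrow> bool) \<Rightarrow> ('q \<Rightarrow> bool) \<Rightarrow> bool" where
  "fond_succ P a t t' \<longleftrightarrow>
     (\<exists>c. (\<forall>g \<in> fEff P a. c g \<in> set g) \<and> t' = apply_eff (\<Union>g \<in> fEff P a. c g) t)"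

definition fond_inf_traj :: "('q, 'a) fond \<Rightarrow> (('q \<Rightarrow> bool) \<Rightarrow> 'a option)
    \<Rightarrow> (nat \<Rightarrow> ('q \<Rightarrow> bool)) \<Rightarrow> bool" where
  "fond_inf_traj P \<pi> t \<longleftrightarrow> t 0 = fInit P \<and>
     (\<forall>i. \<exists>a. \<pi> (t i) = Some a \<and> fond_applicable P a (t i) \<and> fond_succ P a (t i) (t (Suc i)))"

fun tr_lit :: "('p, 'v) lit \<Rightarrow> (('p, 'v) atom \<times> bool)" where
  "tr_lit (FLit (FPos p)) = (PA p, True)"
| "tr_lit (FLit (FNeg p)) = (PA p, False)"
| "tr_lit (VZero X) = (ZA X, True)"
| "tr_lit (VPos X) = (ZA X, False)"

definition TD :: "('p, 'v, 'a) qnp \<Rightarrow> (('p, 'v) atom, 'a) fond" where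
  "TD Q = \<lparr> fAtoms = PA ` qF Q \<union> ZA ` qV Q,
            fInit = (\<lambda>q. case q of PA p \<Rightarrow> p \<in> qF Q \<and> FLit (FPos p) \<in> qI Q
                                  | ZA X \<Rightarrow> X \<in> qV Q \<and> VZero X \<in> qI Q),
            fGoal = tr_lit ` qG Q,
            fActs = qO Q,
            fPre = (\<lambda>a. tr_lit ` qPre Q a),
            fEff = (\<lambda>a. {[(\<lambda>l. tr_lit (FLit l)) ` qEff Q a]} \<union>
                        {g. \<exists>X. (Inc X \<in> qN Q a \<and> g = [{(ZA X, False)}]) \<or>
                                (Dec X \<in> qN Q a \<and> g = [{(ZA X, False)}, {(ZA X, True)}])}) \<rparr>"

text \<open>The QNP policy used on boolean states: \<bar>s \<mapsto> \<pi>(s) (well defined since \<pi> is a policy).\<close>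
definition fond_pol :: "('p, 'v, 'a) qnp \<Rightarrow> (('p, 'v) qstate \<Rightarrow> 'a option)
    \<Rightarrow> (('p, 'v) atom \<Rightarrow> bool) \<Rightarrow> 'a option" where
  "fond_pol Q \<pi> t = (if \<exists>s. bstate Q s = t then \<pi> (SOME s. bstate Q s = t) else None)"

end

theory Submission
  imports Defs
begin

text \<open>(i) A QNP transition is simulated in \<open>T_D(Q)\<close> by resolving each nondeterministic
  effect \<open>\<not>p\<^sub>X\<^sub>=\<^sub>0 | p\<^sub>X\<^sub>=\<^sub>0\<close> of a decrement according to whether \<open>X\<close> actually reached \<open>0\<close>;
  preconditions and initial states transfer literal by literal.
  (ii) In the one-variable QNP whose only action decrements a positive \<open>X\<close>, the FOND
  trajectory that always picks \<open>X > 0\<close> runs forever, whereas an \<open>\<epsilon>\<close>-trajectory of the QNP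
  decreases \<open>X\<close> by at least \<open>\<epsilon>\<close> per step while it stays positive and so reaches \<open>X = 0\<close>.\<close>

lemma fond_pol_bstate:
  assumes "qnp_policy Q \<pi>"
  shows "fond_pol Q \<pi> (bstate Q s) = \<pi> s"
proof -
  have "bstate Q (SOME s'. bstate Q s' = bstate Q s) = bstate Q s"
    by (rule someI[of _ s]) simp
  then show ?thesis
    using assms unfolding fond_pol_def qnp_policy_def by metis
qed

lemma bstate_qnp_initial:
  assumes "qnp_initial Q s"
  shows "bstate Q s = fInit (TD Q)"
proof
  fix q
  show "bstate Q s q = fInit (TD Q) q"
    using assms by (cases q) (auto simp: bstate_def TD_def qnp_initial_def)
qed

lemma bstate_tr_lit:
  assumes "lit_in (qF Q) (qV Q) l" and "sat_lit s l"
  shows "bstate Q s (fst (tr_lit l)) = snd (tr_lit l)"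
  using assms by (cases l rule: tr_lit.cases) (auto simp: bstate_def)

lemma fond_applicable_TD:
  assumes wf: "qnp_wf Q" and app: "qnp_applicable Q a s"
  shows "fond_applicable (TD Q) a (bstate Q s)"
proof -
  have a: "a \<in> qO Q" and sat: "\<forall>l\<in>qPre Q a. sat_lit s l"
    using app by (auto simp: qnp_applicable_def)
  have "\<forall>l\<in>qPre Q a. lit_in (qF Q) (qV Q) l"
    using wf a by (auto simp: qnp_wf_def)
  with sat have "\<forall>l\<in>qPre Q a. bstate Q s (fst (tr_lit l)) = snd (tr_lit l)"
    using bstate_tr_lit by blast
  with a show ?thesis
    by (auto simp: fond_applicable_def TD_def)
qed

lemma tr_flit_image_iff:
  "(q, b) \<in> (\<lambda>l. tr_lit (FLit l)) ` E \<longleftrightarrow>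
     (\<exists>p. q = PA p \<and> (if b then FPos p \<in> E else FNeg p \<in> E))"
proof
  assume "(q, b) \<in> (\<lambda>l. tr_lit (FLit l)) ` E"
  then obtain l where "l \<in> E" "(q, b) = tr_lit (FLit l)" by blast
  then show "\<exists>p. q = PA p \<and> (if b then FPos p \<in> E else FNeg p \<in> E)"
    by (cases l) auto
next
  assume "\<exists>p. q = PA p \<and> (if b then FPos p \<in> E else FNeg p \<in> E)"
  then obtain p where "q = PA p" "if b then FPos p \<in> E else FNeg p \<in> E" by blast
  then show "(q, b) \<in> (\<lambda>l. tr_lit (FLit l)) ` E"
    by (cases b) (auto intro: rev_image_eqI)
qed

text \<open>\<open>zero X\<close> is the alternative chosen for the nondeterministic effect of \<open>Dec X\<close>.\<close>

lemma fond_succ_TD: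
  fixes Q :: "('p, 'v, 'a) qnp" and zero :: "'v \<Rightarrow> bool"
  shows "fond_succ (TD Q) a t
           (apply_eff ((\<lambda>l. tr_lit (FLit l)) ` qEff Q a
                       \<union> {(ZA X, False) | X. Inc X \<in> qN Q a}
                       \<union> {(ZA X, zero X) | X. Dec X \<in> qN Q a}) t)"
proof -
  define c where "c = (\<lambda>g :: (('p, 'v) atom \<times> bool) set list. case g of
      [A, B] \<Rightarrow> (if \<exists>X. B = {(ZA X, True)} \<and> zero X then B else A) | _ \<Rightarrow> hd g)"
  have "\<forall>g \<in> fEff (TD Q) a. c g \<in> set g"
    by (auto simp: TD_def c_def)
  moreover have "(\<Union>g \<in> fEff (TD Q) a. c g) =
      (\<lambda>l. tr_lit (FLit l)) ` qEff Q a \<union> {(ZA X, False) | X. Inc X \<in> qN Q a}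
      \<union> {(ZA X, zero X) | X. Dec X \<in> qN Q a}"
    by (auto simp: TD_def c_def split: if_splits)
  ultimately show ?thesis
    unfolding fond_succ_def by (intro exI[of _ c]) simp
qed

lemma fond_succ_TD_bstate:
  assumes wf: "qnp_wf Q" and a: "a \<in> qO Q"
    and s: "is_qstate s" and succ: "qnp_succ Q a s s'"
  shows "fond_succ (TD Q) a (bstate Q s) (bstate Q s')"
proof -
  let ?U = "(\<lambda>l. tr_lit (FLit l)) ` qEff Q a \<union> {(ZA X, False) | X. Inc X \<in> qN Q a}
              \<union> {(ZA X, snd s' X = 0) | X. Dec X \<in> qN Q a}"
  have eff: "\<forall>l \<in> qEff Q a. lit_in (qF Q) (qV Q) (FLit l)"
    and vars: "\<forall>n \<in> qN Q a. natom_var n \<in> qV Q"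
    and inc_dec: "\<forall>X. \<not> (Inc X \<in> qN Q a \<and> Dec X \<in> qN Q a)"
    using wf a by (auto simp: qnp_wf_def)
  have "bstate Q s' q = apply_eff ?U (bstate Q s) q" for q
  proof (cases q)
    case (PA p)
    have "fst s' = apply_flits (qEff Q a) (fst s)"
      using succ by (simp add: qnp_succ_def)
    with PA eff show ?thesis
      by (auto simp: apply_eff_def bstate_def apply_flits_def tr_flit_image_iff)
  next
    case (ZA X)
    have "Inc X \<in> qN Q a \<Longrightarrow> X \<in> qV Q" "Dec X \<in> qN Q a \<Longrightarrow> X \<in> qV Q"
      using vars by force+
    moreover have "snd s X \<ge> 0"
      using s by (simp add: is_qstate_def)
    ultimately show ?thesis
      using ZA inc_dec[rule_format, of X] succ
      by (auto simp: apply_eff_def bstate_def qnp_succ_def tr_flit_image_iff)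
  qed
  then show ?thesis
    using fond_succ_TD[of Q a "bstate Q s" "\<lambda>X. snd s' X = 0"] by presburger
qed

lemma qnp_inf_traj_is_qstate:
  assumes "qnp_inf_traj Q \<pi> s"
  shows "is_qstate (s i)"
  using assms by (cases i) (auto simp: qnp_inf_traj_def qnp_initial_def qnp_succ_def)

theorem fond_inf_traj_TD_bstate:
  assumes wf: "qnp_wf Q" and pol: "qnp_policy Q \<pi>" and tr: "qnp_inf_traj Q \<pi> s"
  shows "fond_inf_traj (TD Q) (fond_pol Q \<pi>) (\<lambda>i. bstate Q (s i))"
  unfolding fond_inf_traj_def
proof (intro conjI allI)
  show "bstate Q (s 0) = fInit (TD Q)"
    using tr by (simp add: qnp_inf_traj_def bstate_qnp_initial)
next
  fix i
  obtain a where a: "\<pi> (s i) = Some a" "qnp_applicable Q a (s i)" "qnp_succ Q a (s i) (s (Suc i))"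
    using tr by (auto simp: qnp_inf_traj_def)
  then have "a \<in> qO Q"
    by (simp add: qnp_applicable_def)
  with a wf show "\<exists>a. fond_pol Q \<pi> (bstate Q (s i)) = Some a
      \<and> fond_applicable (TD Q) a (bstate Q (s i))
      \<and> fond_succ (TD Q) a (bstate Q (s i)) (bstate Q (s (Suc i)))"
    using fond_pol_bstate[OF pol] fond_applicable_TD fond_succ_TD_bstate qnp_inf_traj_is_qstate[OF tr]
    by metis
qed

lemma eps_step_decrease:
  assumes "eps_step \<epsilon> s s'" and "snd s' X < snd s X" and "snd s' X \<noteq> 0"
  shows "snd s' X \<le> snd s X - \<epsilon>"
proof -
  have "\<epsilon> \<le> \<bar>snd s' X - snd s X\<bar> \<or> 0 = snd s' X"
    using assms(1,2) unfolding eps_step_def by (metis less_irrefl)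
  with assms(2,3) show ?thesis
    by linarith
qed

lemma no_nonneg_eps_descent:
  fixes f :: "nat \<Rightarrow> real"
  assumes "\<epsilon> > 0" and "\<And>i. f i \<ge> 0" and "\<And>i. f (Suc i) \<le> f i - \<epsilon>"
  shows False
proof -
  have lin: "f i \<le> f 0 - real i * \<epsilon>" for i
  proof (induction i)
    case (Suc i)
    then show ?case
      using assms(3)[of i] by (simp add: algebra_simps)
  qed simp
  obtain n :: nat where "real n * \<epsilon> > f 0"
    using reals_Archimedean3[OF assms(1)] by blast
  with lin[of n] assms(2)[of n] show False
    by linarith
qed

definition countdown_qnp :: "(nat, nat, nat) qnp" where
  "countdown_qnp = \<lparr> qF = {}, qV = {0}, qI = {VPos 0}, qO = {0}, qG = {VZero 0},
     qPre = (\<lambda>_. {VPos 0}), qEff = (\<lambda>_. {}), qN = (\<lambda>_. {Dec 0}) \<rparr>"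

lemma countdown_qnp_wf: "qnp_wf countdown_qnp"
  by (simp add: qnp_wf_def countdown_qnp_def lits_consistent_def)

lemma bstate_countdown_qnp:
  "bstate countdown_qnp s = (\<lambda>q. q = ZA 0 \<and> snd s 0 = 0)"
  by (rule ext, simp add: bstate_def countdown_qnp_def split: atom.split) blast

lemma fond_inf_traj_countdown_qnp:
  "fond_inf_traj (TD countdown_qnp) (fond_pol countdown_qnp (\<lambda>_. Some 0)) (\<lambda>_ _. False)"
proof -
  have "bstate countdown_qnp (\<lambda>_. False, \<lambda>_. 1) = (\<lambda>_. False)"
    by (simp add: bstate_countdown_qnp)
  then have "fond_pol countdown_qnp (\<lambda>_. Some 0) (\<lambda>_. False) = Some 0"
    unfolding fond_pol_def by auto
  moreover have "fInit (TD countdown_qnp) = (\<lambda>_. False)"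
    by (rule ext, simp add: TD_def countdown_qnp_def split: atom.split)
  moreover have "fond_applicable (TD countdown_qnp) 0 (\<lambda>_. False)"
    by (simp add: fond_applicable_def TD_def countdown_qnp_def)
  moreover have "fond_succ (TD countdown_qnp) 0 (\<lambda>_. False) (\<lambda>_. False)"
    using fond_succ_TD[of countdown_qnp 0 "\<lambda>_. False" "\<lambda>_. False"]
    by (simp add: countdown_qnp_def apply_eff_def)
  ultimately show ?thesis
    by (simp add: fond_inf_traj_def)
qed

lemma qnp_inf_traj_countdown_qnp_reaches_zero:
  assumes tr: "qnp_inf_traj countdown_qnp \<pi> s"
  shows "\<exists>i. snd (s i) 0 = 0"
proof (rule ccontr)
  assume pos: "\<nexists>i. snd (s i) 0 = 0"
  obtain \<epsilon> where "\<epsilon> > 0" and eps: "\<And>i. eps_step \<epsilon> (s i) (s (Suc i))"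
    using tr by (auto simp: qnp_inf_traj_def)
  have "snd (s i) 0 \<ge> 0" for i
    using qnp_inf_traj_is_qstate[OF tr] by (simp add: is_qstate_def)
  moreover have "snd (s (Suc i)) 0 \<le> snd (s i) 0 - \<epsilon>" for i
  proof (rule eps_step_decrease[OF eps])
    show "snd (s (Suc i)) 0 < snd (s i) 0"
      using tr by (auto simp: qnp_inf_traj_def qnp_succ_def countdown_qnp_def)
    show "snd (s (Suc i)) 0 \<noteq> 0"
      using pos by blast
  qed
  ultimately show False
    using no_nonneg_eps_descent[OF \<open>\<epsilon> > 0\<close>, of "\<lambda>i. snd (s i) 0"] by blast
qed

theorem theorem2:
  shows "(\<forall>(Q :: ('p, 'v, 'a) qnp) \<pi> s.
            qnp_wf Q \<and> qnp_policy Q \<pi> \<and> qnp_inf_traj Q \<pi> s \<longrightarrow>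
            fond_inf_traj (TD Q) (fond_pol Q \<pi>) (\<lambda>i. bstate Q (s i)))
       \<and> (\<exists>(Q :: (nat, nat, nat) qnp) \<pi> t.
            qnp_wf Q \<and> qnp_policy Q \<pi> \<and> fond_inf_traj (TD Q) (fond_pol Q \<pi>) t \<and>
            \<not> (\<exists>s. qnp_inf_traj Q \<pi> s \<and> (\<forall>i. bstate Q (s i) = t i)))"
proof (intro conjI allI impI exI)
  fix Q :: "('p, 'v, 'a) qnp" and \<pi> s
  assume "qnp_wf Q \<and> qnp_policy Q \<pi> \<and> qnp_inf_traj Q \<pi> s"
  then show "fond_inf_traj (TD Q) (fond_pol Q \<pi>) (\<lambda>i. bstate Q (s i))"
    using fond_inf_traj_TD_bstate by blast
next
  show "qnp_wf countdown_qnp"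
    by (rule countdown_qnp_wf)
  show "qnp_policy countdown_qnp (\<lambda>_. Some 0)"
    by (simp add: qnp_policy_def)
  show "fond_inf_traj (TD countdown_qnp) (fond_pol countdown_qnp (\<lambda>_. Some 0)) (\<lambda>_ _. False)"
    by (rule fond_inf_traj_countdown_qnp)
  show "\<nexists>s. qnp_inf_traj countdown_qnp (\<lambda>_. Some 0) s \<and> (\<forall>i. bstate countdown_qnp (s i) = (\<lambda>_. False))"
    using qnp_inf_traj_countdown_qnp_reaches_zero by (metis bstate_countdown_qnp)
qed

end
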